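(* Let $Q$ be a commutative automorphic loop of nilpotency class $3$. Then $(a,b,c)=(c,b,a)^{-1}$ and $(a,b,c)=(a,c,b)(b,a,c)$ for every $a,b,c\in Q$.
   Context: A loop is a set with a binary operation such that all left and right translations $L_a:b\mapsto ab$, $R_a:b\mapsto ba$ are bijections and there is a two-sided identity $1$. The inner mapping group is the stabilizer of $1$ in the group generated by all translations; $Q$ is automorphic if all inner mappings are automorphisms (such loops are power-associative, so inverses are two-sided). The associator $(a,b,c)$ is defined by $(ab)c=(a(bc))(a,b,c)$. The center $Z(Q)$ is the set of elements fixed by all inner mappings; $Z_0=1$, $Z_{i+1}(Q)$ is the preimage of $Z(Q/Z_i(Q))$, and $Q$ has nilpotency class $n$ if $Z_{n-1}(Q)\neq Q=Z_n(Q)$. *)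

theory Defs
  imports Main "HOL-Library.FuncSet"
begin

definition loop :: "'a set \<Rightarrow> ('a \<Rightarrow> 'a \<Rightarrow> 'a) \<Rightarrow> 'a \<Rightarrow> bool" where
  "loop Q m e \<longleftrightarrow> e \<in> Q \<and> (\<forall>a\<in>Q. \<forall>b\<in>Q. m a b \<in> Q)
     \<and> (\<forall>a\<in>Q. m e a = a \<and> m a e = a)
     \<and> (\<forall>a\<in>Q. bij_betw (\<lambda>b. m a b) Q Q \<and> bij_betw (\<lambda>b. m b a) Q Q)"

inductive_set mlt :: "'a set \<Rightarrow> ('a \<Rightarrow> 'a \<Rightarrow> 'a) \<Rightarrow> ('a \<Rightarrow> 'a) set"
  for Q :: "'a set" and m :: "'a \<Rightarrow> 'a \<Rightarrow> 'a" where
  mlt_id: "(\<lambda>x\<in>Q. x) \<in> mlt Q m"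
| mlt_L: "f \<in> mlt Q m \<Longrightarrow> a \<in> Q \<Longrightarrow> (\<lambda>x\<in>Q. m a (f x)) \<in> mlt Q m"
| mlt_R: "f \<in> mlt Q m \<Longrightarrow> a \<in> Q \<Longrightarrow> (\<lambda>x\<in>Q. m (f x) a) \<in> mlt Q m"
| mlt_Linv: "f \<in> mlt Q m \<Longrightarrow> a \<in> Q \<Longrightarrow>
     (\<lambda>x\<in>Q. the_inv_into Q (\<lambda>y. m a y) (f x)) \<in> mlt Q m"
| mlt_Rinv: "f \<in> mlt Q m \<Longrightarrow> a \<in> Q \<Longrightarrow>
     (\<lambda>x\<in>Q. the_inv_into Q (\<lambda>y. m y a) (f x)) \<in> mlt Q m"

definition inner :: "'a set \<Rightarrow> ('a \<Rightarrow> 'a \<Rightarrow> 'a) \<Rightarrow> 'a \<Rightarrow> ('a \<Rightarrow> 'a) set" where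
  "inner Q m e = {f \<in> mlt Q m. f e = e}"

definition automorphic_loop :: "'a set \<Rightarrow> ('a \<Rightarrow> 'a \<Rightarrow> 'a) \<Rightarrow> 'a \<Rightarrow> bool" where
  "automorphic_loop Q m e \<longleftrightarrow> loop Q m e \<and>
     (\<forall>f\<in>inner Q m e. bij_betw f Q Q \<and> (\<forall>x\<in>Q. \<forall>y\<in>Q. f (m x y) = m (f x) (f y)))"

definition commutative_loop :: "'a set \<Rightarrow> ('a \<Rightarrow> 'a \<Rightarrow> 'a) \<Rightarrow> bool" where
  "commutative_loop Q m \<longleftrightarrow> (\<forall>a\<in>Q. \<forall>b\<in>Q. m a b = m b a)"

definition loop_center :: "'a set \<Rightarrow> ('a \<Rightarrow> 'a \<Rightarrow> 'a) \<Rightarrow> 'a \<Rightarrow> 'a set" where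
  "loop_center Q m e = {x \<in> Q. \<forall>f\<in>inner Q m e. f x = x}"

definition lcoset :: "('a \<Rightarrow> 'a \<Rightarrow> 'a) \<Rightarrow> 'a \<Rightarrow> 'a set \<Rightarrow> 'a set" where
  "lcoset m x N = (\<lambda>n. m x n) ` N"

definition quot_carrier :: "'a set \<Rightarrow> ('a \<Rightarrow> 'a \<Rightarrow> 'a) \<Rightarrow> 'a set \<Rightarrow> 'a set set" where
  "quot_carrier Q m N = {lcoset m x N | x. x \<in> Q}"

definition quot_mult :: "('a \<Rightarrow> 'a \<Rightarrow> 'a) \<Rightarrow> 'a set \<Rightarrow> 'a set \<Rightarrow> 'a set \<Rightarrow> 'a set" where
  "quot_mult m N A B = lcoset m (m (SOME a. a \<in> A) (SOME b. b \<in> B)) N"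

fun upper_center :: "'a set \<Rightarrow> ('a \<Rightarrow> 'a \<Rightarrow> 'a) \<Rightarrow> 'a \<Rightarrow> nat \<Rightarrow> 'a set" where
  "upper_center Q m e 0 = {e}"
| "upper_center Q m e (Suc i) =
     {x \<in> Q. lcoset m x (upper_center Q m e i) \<in>
        loop_center (quot_carrier Q m (upper_center Q m e i))
                    (quot_mult m (upper_center Q m e i)) (upper_center Q m e i)}"

definition nilpotency_class :: "'a set \<Rightarrow> ('a \<Rightarrow> 'a \<Rightarrow> 'a) \<Rightarrow> 'a \<Rightarrow> nat \<Rightarrow> bool" where
  "nilpotency_class Q m e n \<longleftrightarrow>
     upper_center Q m e (n - 1) \<noteq> Q \<and> upper_center Q m e n = Q"

definition associator :: "'a set \<Rightarrow> ('a \<Rightarrow> 'a \<Rightarrow> 'a) \<Rightarrow> 'a \<Rightarrow> 'a \<Rightarrow> 'a \<Rightarrow> 'a" where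
  "associator Q m a b c = the_inv_into Q (\<lambda>d. m (m a (m b c)) d) (m (m a b) c)"

text \<open>Inverse: the unique y with x y = 1 (two-sided in automorphic loops).\<close>

definition loop_inv :: "'a set \<Rightarrow> ('a \<Rightarrow> 'a \<Rightarrow> 'a) \<Rightarrow> 'a \<Rightarrow> 'a \<Rightarrow> 'a" where
  "loop_inv Q m e x = the_inv_into Q (\<lambda>y. m x y) e"

end

theory Submission
  imports Defs
begin

text \<open>In a commutative loop an element z is central exactly when it is nuclear,
  a(bz) = (ab)z for all a, b. Applied to quotients, this identifies Z_{i+1} with the
  set of x satisfying a(bx) \<equiv> (ab)x modulo Z_i, so in class 3 every associator lies in Z_2.

  An inner mapping L_{a,b} = L_{ab}^{-1} L_a L_b that moves every element only by a
  central factor fixes every associator: it is an automorphism, so applying it to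
  (p(qr))(p,q,r) = (pq)r and cancelling leaves no room for a central factor on (p,q,r).
  For v \<in> Z_2 both L_{v,x} and L_{x,v} are of this kind, which yields (xu)v = x(uv) for
  every associator u. Both identities follow by expanding (ab)c = c(ba), resp.
  (ab)c = (ba)c, with the associators (c,b,a), resp. (a,c,b) and (b,a,c), and cancelling.\<close>

section \<open>Commutative loops and their center\<close>

locale comm_loop =
  fixes Q :: "'a set" and mult :: "'a \<Rightarrow> 'a \<Rightarrow> 'a" (infixl "\<cdot>" 70) and e :: 'a
  assumes loop: "loop Q (\<cdot>) e" and commutative: "commutative_loop Q (\<cdot>)"
begin

lemma unit_closed [simp]: "e \<in> Q"
  using loop by (simp add: loop_def)

lemma mult_closed [simp]: "a \<in> Q \<Longrightarrow> b \<in> Q \<Longrightarrow> a \<cdot> b \<in> Q"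
  using loop by (simp add: loop_def)

lemma left_unit [simp]: "a \<in> Q \<Longrightarrow> e \<cdot> a = a"
  using loop by (simp add: loop_def)

lemma right_unit [simp]: "a \<in> Q \<Longrightarrow> a \<cdot> e = a"
  using loop by (simp add: loop_def)

lemma mult_commute: "a \<in> Q \<Longrightarrow> b \<in> Q \<Longrightarrow> a \<cdot> b = b \<cdot> a"
  using commutative by (simp add: commutative_loop_def)

lemma bij_left_mult: "a \<in> Q \<Longrightarrow> bij_betw ((\<cdot>) a) Q Q"
  using loop unfolding loop_def by blast

lemma bij_right_mult: "a \<in> Q \<Longrightarrow> bij_betw (\<lambda>b. b \<cdot> a) Q Q"
  using loop unfolding loop_def by blast

lemma left_cancel: "a \<in> Q \<Longrightarrow> x \<in> Q \<Longrightarrow> y \<in> Q \<Longrightarrow> a \<cdot> x = a \<cdot> y \<Longrightarrow> x = y"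
  by (meson bij_betw_def bij_left_mult inj_onD)

abbreviation ldiv :: "'a \<Rightarrow> 'a \<Rightarrow> 'a" where
  "ldiv a w \<equiv> the_inv_into Q ((\<cdot>) a) w"

abbreviation rdiv :: "'a \<Rightarrow> 'a \<Rightarrow> 'a" where
  "rdiv w a \<equiv> the_inv_into Q (\<lambda>b. b \<cdot> a) w"

lemma ldiv_closed [simp]: "a \<in> Q \<Longrightarrow> w \<in> Q \<Longrightarrow> ldiv a w \<in> Q"
  by (metis bij_left_mult bij_betw_def the_inv_into_into order_refl)

lemma mult_ldiv [simp]: "a \<in> Q \<Longrightarrow> w \<in> Q \<Longrightarrow> a \<cdot> ldiv a w = w"
  by (metis bij_left_mult bij_betw_def f_the_inv_into_f)

lemma ldiv_mult [simp]: "a \<in> Q \<Longrightarrow> x \<in> Q \<Longrightarrow> ldiv a (a \<cdot> x) = x"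
  by (metis bij_left_mult bij_betw_def the_inv_into_f_f)

lemma rdiv_closed [simp]: "a \<in> Q \<Longrightarrow> w \<in> Q \<Longrightarrow> rdiv w a \<in> Q"
  by (metis bij_right_mult bij_betw_def the_inv_into_into order_refl)

lemma mult_rdiv [simp]: "a \<in> Q \<Longrightarrow> w \<in> Q \<Longrightarrow> rdiv w a \<cdot> a = w"
  using f_the_inv_into_f[of "\<lambda>b. b \<cdot> a" Q w] bij_right_mult bij_betw_def by metis

lemma rdiv_mult [simp]: "a \<in> Q \<Longrightarrow> x \<in> Q \<Longrightarrow> rdiv (x \<cdot> a) a = x"
  using the_inv_into_f_f[of "\<lambda>b. b \<cdot> a" Q x] bij_right_mult bij_betw_def by metis

lemma mlt_closed: "g \<in> mlt Q (\<cdot>) \<Longrightarrow> y \<in> Q \<Longrightarrow> g y \<in> Q"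
  by (induction arbitrary: y rule: mlt.induct) auto

definition nuclear :: "'a \<Rightarrow> bool" where
  "nuclear z \<longleftrightarrow> (\<forall>a\<in>Q. \<forall>b\<in>Q. a \<cdot> (b \<cdot> z) = (a \<cdot> b) \<cdot> z)"

lemma nuclearD: "nuclear z \<Longrightarrow> a \<in> Q \<Longrightarrow> b \<in> Q \<Longrightarrow> a \<cdot> (b \<cdot> z) = (a \<cdot> b) \<cdot> z"
  unfolding nuclear_def by blast

lemma nuclear_left_commute:
  assumes "z \<in> Q" "nuclear z" "a \<in> Q" "w \<in> Q"
  shows "a \<cdot> (z \<cdot> w) = z \<cdot> (a \<cdot> w)"
proof -
  have "a \<cdot> (z \<cdot> w) = a \<cdot> (w \<cdot> z)"
    using assms by (simp add: mult_commute)
  also have "\<dots> = z \<cdot> (a \<cdot> w)"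
    using assms nuclearD[of z a w] mult_commute[of z "a \<cdot> w"] by simp
  finally show ?thesis .
qed

text \<open>L_z commutes with every translation (R_a = L_a by commutativity), hence with the
  whole multiplication group.\<close>

lemma mlt_commute_nuclear:
  assumes z: "z \<in> Q" "nuclear z"
  shows "g \<in> mlt Q (\<cdot>) \<Longrightarrow> y \<in> Q \<Longrightarrow> g (z \<cdot> y) = z \<cdot> g y"
proof (induction arbitrary: y rule: mlt.induct)
  case mlt_id
  then show ?case using z by simp
next
  case (mlt_L g a)
  have "g y \<in> Q" using mlt_L mlt_closed by blast
  then show ?case using mlt_L nuclear_left_commute[OF z mlt_L(2)] z by simp
next
  case (mlt_R g a)
  have "g y \<in> Q" using mlt_R mlt_closed by blast
  then show ?case using mlt_R nuclear_left_commute[OF z mlt_R(2)] z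
    by (simp add: mult_commute[of _ a])
next
  case (mlt_Linv g a)
  have gy: "g y \<in> Q" using mlt_Linv mlt_closed by blast
  have "a \<cdot> (z \<cdot> ldiv a (g y)) = z \<cdot> g y"
    using nuclear_left_commute[OF z mlt_Linv(2)] gy mlt_Linv(2) by simp
  then have "ldiv a (z \<cdot> g y) = z \<cdot> ldiv a (g y)"
    by (metis gy ldiv_closed ldiv_mult mlt_Linv(2) mult_closed z(1))
  then show ?case using mlt_Linv z by simp
next
  case (mlt_Rinv g a)
  have gy: "g y \<in> Q" using mlt_Rinv mlt_closed by blast
  have "(z \<cdot> rdiv (g y) a) \<cdot> a = z \<cdot> g y"
    using nuclear_left_commute[OF z mlt_Rinv(2)] gy mlt_Rinv(2)
    by (metis mult_closed mult_commute mult_rdiv rdiv_closed z(1))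
  then have "rdiv (z \<cdot> g y) a = z \<cdot> rdiv (g y) a"
    by (metis gy rdiv_closed rdiv_mult mlt_Rinv(2) mult_closed z(1))
  then show ?case using mlt_Rinv z by simp
qed

definition left_inner_map :: "'a \<Rightarrow> 'a \<Rightarrow> 'a \<Rightarrow> 'a" where
  "left_inner_map a b = (\<lambda>y\<in>Q. ldiv (a \<cdot> b) (a \<cdot> (b \<cdot> y)))"

lemma left_inner_map_inner:
  assumes "a \<in> Q" "b \<in> Q"
  shows "left_inner_map a b \<in> inner Q (\<cdot>) e"
proof -
  \<comment> \<open>L_{ab}^{-1} L_a L_b in exactly the restricted form produced by the rules of mlt\<close>
  have "(\<lambda>x\<in>Q. ldiv (a \<cdot> b) ((\<lambda>x\<in>Q. a \<cdot> ((\<lambda>x\<in>Q. b \<cdot> ((\<lambda>x\<in>Q. x) x)) x)) x)) \<in> mlt Q (\<cdot>)"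
    using assms by (intro mlt.intros) auto
  moreover have "(\<lambda>x\<in>Q. ldiv (a \<cdot> b) ((\<lambda>x\<in>Q. a \<cdot> ((\<lambda>x\<in>Q. b \<cdot> ((\<lambda>x\<in>Q. x) x)) x)) x))
      = left_inner_map a b"
    by (auto simp: left_inner_map_def)
  moreover have "left_inner_map a b e = e"
    using assms ldiv_mult[of "a \<cdot> b" e] by (simp add: left_inner_map_def)
  ultimately show ?thesis
    by (simp add: inner_def)
qed

lemma left_inner_map_closed: "a \<in> Q \<Longrightarrow> b \<in> Q \<Longrightarrow> y \<in> Q \<Longrightarrow> left_inner_map a b y \<in> Q"
  by (simp add: left_inner_map_def)

lemma mult_left_inner_map:
  "a \<in> Q \<Longrightarrow> b \<in> Q \<Longrightarrow> y \<in> Q \<Longrightarrow> (a \<cdot> b) \<cdot> left_inner_map a b y = a \<cdot> (b \<cdot> y)"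
  by (simp add: left_inner_map_def)

abbreviation center :: "'a set" where
  "center \<equiv> loop_center Q (\<cdot>) e"

lemma center_iff_nuclear: "z \<in> center \<longleftrightarrow> z \<in> Q \<and> nuclear z"
proof
  assume z: "z \<in> center"
  then have "left_inner_map a b z = z" if "a \<in> Q" "b \<in> Q" for a b
    using left_inner_map_inner[OF that] by (simp add: loop_center_def)
  then show "z \<in> Q \<and> nuclear z"
    using z mult_left_inner_map unfolding loop_center_def nuclear_def
    by (metis (no_types, lifting) mem_Collect_eq)
next
  assume z: "z \<in> Q \<and> nuclear z"
  have "g z = z" if "g \<in> mlt Q (\<cdot>)" "g e = e" for g
    using mlt_commute_nuclear[of z g e] z that by simp
  then show "z \<in> center"
    using z by (simp add: loop_center_def inner_def)
qed

lemma center_closed: "z \<in> center \<Longrightarrow> z \<in> Q"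
  using center_iff_nuclear by blast

lemma center_mult_mult:
  assumes "z \<in> center" "z' \<in> center" "x \<in> Q" "y \<in> Q"
  shows "(x \<cdot> z) \<cdot> (y \<cdot> z') = (x \<cdot> y) \<cdot> (z \<cdot> z')"
proof -
  have z: "z \<in> Q" "nuclear z" "z' \<in> Q" "nuclear z'"
    using assms center_iff_nuclear by auto
  have "(x \<cdot> z) \<cdot> (y \<cdot> z') = ((x \<cdot> z) \<cdot> y) \<cdot> z'"
    using assms z nuclearD[of z'] by simp
  also have "(x \<cdot> z) \<cdot> y = (x \<cdot> y) \<cdot> z"
    using assms z nuclearD[of z y x] by (simp add: mult_commute)
  also have "((x \<cdot> y) \<cdot> z) \<cdot> z' = (x \<cdot> y) \<cdot> (z \<cdot> z')"
    using assms z nuclearD[of z' "x \<cdot> y" z] by simp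
  finally show ?thesis .
qed

section \<open>Cosets, quotients and the upper central series\<close>

abbreviation coset :: "'a \<Rightarrow> 'a set \<Rightarrow> 'a set" where
  "coset x N \<equiv> lcoset (\<cdot>) x N"

lemma coset_mem_iff: "y \<in> coset x N \<longleftrightarrow> (\<exists>n\<in>N. y = x \<cdot> n)"
  by (auto simp: lcoset_def)

text \<open>Normality of N phrased through left cosets, in the form needed to make the quotient
  of quot_carrier and quot_mult a commutative loop.\<close>

definition normal_subloop :: "'a set \<Rightarrow> bool" where
  "normal_subloop N \<longleftrightarrow> e \<in> N \<and> N \<subseteq> Q
    \<and> (\<forall>x\<in>Q. \<forall>y\<in>coset x N. coset y N = coset x N)
    \<and> (\<forall>a\<in>Q. \<forall>b\<in>Q. \<forall>n\<in>N. \<forall>n'\<in>N. (a \<cdot> n) \<cdot> (b \<cdot> n') \<in> coset (a \<cdot> b) N)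
    \<and> (\<forall>c\<in>Q. \<forall>t\<in>Q. \<forall>n\<in>N. \<exists>n'\<in>N. (c \<cdot> t) \<cdot> n = c \<cdot> (t \<cdot> n'))"

definition central_mod :: "'a set \<Rightarrow> 'a set" where
  "central_mod N = {x \<in> Q. \<forall>a\<in>Q. \<forall>b\<in>Q. coset (a \<cdot> (b \<cdot> x)) N = coset ((a \<cdot> b) \<cdot> x) N}"

lemma central_modD:
  "x \<in> central_mod N \<Longrightarrow> a \<in> Q \<Longrightarrow> b \<in> Q \<Longrightarrow> coset (a \<cdot> (b \<cdot> x)) N = coset ((a \<cdot> b) \<cdot> x) N"
  unfolding central_mod_def by blast

lemma central_mod_closed: "x \<in> central_mod N \<Longrightarrow> x \<in> Q"
  unfolding central_mod_def by blast

context
  fixes N assumes normal: "normal_subloop N"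
begin

lemma normal_unit: "e \<in> N"
  using normal unfolding normal_subloop_def by blast

lemma normal_closed: "n \<in> N \<Longrightarrow> n \<in> Q"
  using normal unfolding normal_subloop_def by blast

lemma coset_of_member: "x \<in> Q \<Longrightarrow> y \<in> coset x N \<Longrightarrow> coset y N = coset x N"
  using normal unfolding normal_subloop_def by blast

lemma coset_mult_mem:
  "a \<in> Q \<Longrightarrow> b \<in> Q \<Longrightarrow> n \<in> N \<Longrightarrow> n' \<in> N \<Longrightarrow> (a \<cdot> n) \<cdot> (b \<cdot> n') \<in> coset (a \<cdot> b) N"
  using normal unfolding normal_subloop_def by blast

lemma mult_right_normal_shift:
  "c \<in> Q \<Longrightarrow> t \<in> Q \<Longrightarrow> n \<in> N \<Longrightarrow> \<exists>n'\<in>N. (c \<cdot> t) \<cdot> n = c \<cdot> (t \<cdot> n')"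
  using normal unfolding normal_subloop_def by blast

lemma coset_self: "x \<in> Q \<Longrightarrow> x \<in> coset x N"
  using normal_unit coset_mem_iff[of x x N] by force

lemma coset_eq_iff:
  assumes "p \<in> Q" "q \<in> Q"
  shows "coset p N = coset q N \<longleftrightarrow> (\<exists>\<mu>\<in>N. q = p \<cdot> \<mu>)"
proof
  assume "coset p N = coset q N"
  then show "\<exists>\<mu>\<in>N. q = p \<cdot> \<mu>"
    using coset_self[OF assms(2)] coset_mem_iff by blast
next
  assume "\<exists>\<mu>\<in>N. q = p \<cdot> \<mu>"
  then show "coset p N = coset q N"
    using coset_of_member[OF assms(1)] coset_mem_iff by metis
qed

lemma coset_mult_right: "p \<in> Q \<Longrightarrow> \<mu> \<in> N \<Longrightarrow> coset (p \<cdot> \<mu>) N = coset p N"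
  using coset_of_member[of p "p \<cdot> \<mu>"] coset_mem_iff by blast

lemma coset_mult_cong:
  assumes "p \<in> Q" "p' \<in> Q" "q \<in> Q" "q' \<in> Q"
    and "coset p N = coset p' N" "coset q N = coset q' N"
  shows "coset (p \<cdot> q) N = coset (p' \<cdot> q') N"
proof -
  obtain \<mu> \<mu>' where "\<mu> \<in> N" "p' = p \<cdot> \<mu>" "\<mu>' \<in> N" "q' = q \<cdot> \<mu>'"
    using assms coset_eq_iff by metis
  then have "p' \<cdot> q' \<in> coset (p \<cdot> q) N"
    using coset_mult_mem assms by simp
  then show ?thesis
    using coset_of_member[of "p \<cdot> q" "p' \<cdot> q'"] assms by simp
qed

lemma coset_left_cancel:
  assumes "c \<in> Q" "p \<in> Q" "q \<in> Q" "coset (c \<cdot> p) N = coset (c \<cdot> q) N"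
  shows "coset p N = coset q N"
proof -
  obtain \<mu> where \<mu>: "\<mu> \<in> N" "c \<cdot> q = (c \<cdot> p) \<cdot> \<mu>"
    using assms coset_eq_iff by auto
  obtain n' where n': "n' \<in> N" "(c \<cdot> p) \<cdot> \<mu> = c \<cdot> (p \<cdot> n')"
    using mult_right_normal_shift assms \<mu>(1) by blast
  have "q = p \<cdot> n'"
    using left_cancel[of c q "p \<cdot> n'"] assms \<mu> n' normal_closed by simp
  then show ?thesis
    using coset_eq_iff assms n'(1) by blast
qed

lemma quot_mult_coset:
  assumes "a \<in> Q" "b \<in> Q"
  shows "quot_mult (\<cdot>) N (coset a N) (coset b N) = coset (a \<cdot> b) N"
proof -
  define a' b' where "a' = (SOME x. x \<in> coset a N)" and "b' = (SOME x. x \<in> coset b N)"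
  have "a' \<in> coset a N" "b' \<in> coset b N"
    unfolding a'_def b'_def using coset_self assms by (metis someI)+
  then have "a' \<cdot> b' \<in> coset (a \<cdot> b) N"
    using coset_mult_mem assms coset_mem_iff by metis
  then show ?thesis
    unfolding quot_mult_def a'_def[symmetric] b'_def[symmetric]
    using coset_of_member[of "a \<cdot> b" "a' \<cdot> b'"] assms by simp
qed

lemma quot_carrierE:
  assumes "X \<in> quot_carrier Q (\<cdot>) N"
  obtains x where "x \<in> Q" "X = coset x N"
  using assms unfolding quot_carrier_def by blast

lemma coset_in_quot_carrier: "x \<in> Q \<Longrightarrow> coset x N \<in> quot_carrier Q (\<cdot>) N"
  unfolding quot_carrier_def by blast

lemma coset_unit: "coset e N = N"
  using normal_closed by (force simp: lcoset_def)

lemma quot_mult_commute: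
  "X \<in> quot_carrier Q (\<cdot>) N \<Longrightarrow> Y \<in> quot_carrier Q (\<cdot>) N \<Longrightarrow>
    quot_mult (\<cdot>) N X Y = quot_mult (\<cdot>) N Y X"
  by (elim quot_carrierE) (simp add: quot_mult_coset mult_commute)

lemma bij_quot_left_mult:
  assumes "A \<in> quot_carrier Q (\<cdot>) N"
  shows "bij_betw (quot_mult (\<cdot>) N A) (quot_carrier Q (\<cdot>) N) (quot_carrier Q (\<cdot>) N)"
proof -
  let ?QN = "quot_carrier Q (\<cdot>) N"
  obtain a where a: "a \<in> Q" "A = coset a N"
    using assms quot_carrierE by blast
  have "inj_on (quot_mult (\<cdot>) N A) ?QN"
  proof (rule inj_onI)
    fix X Y assume "X \<in> ?QN" "Y \<in> ?QN" "quot_mult (\<cdot>) N A X = quot_mult (\<cdot>) N A Y"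
    then show "X = Y"
      using a by (elim quot_carrierE) (metis coset_left_cancel quot_mult_coset)
  qed
  moreover have "quot_mult (\<cdot>) N A ` ?QN = ?QN"
  proof
    show "quot_mult (\<cdot>) N A ` ?QN \<subseteq> ?QN"
      using a by (auto elim!: quot_carrierE simp: quot_mult_coset coset_in_quot_carrier)
    show "?QN \<subseteq> quot_mult (\<cdot>) N A ` ?QN"
    proof
      fix W assume "W \<in> ?QN"
      then obtain w where w: "w \<in> Q" "W = coset w N"
        by (rule quot_carrierE)
      then have "W = quot_mult (\<cdot>) N A (coset (ldiv a w) N)"
        using a quot_mult_coset by simp
      then show "W \<in> quot_mult (\<cdot>) N A ` ?QN"
        using a w coset_in_quot_carrier by simp
    qed
  qed
  ultimately show ?thesis
    by (simp add: bij_betw_def)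
qed

lemma comm_loop_quotient: "comm_loop (quot_carrier Q (\<cdot>) N) (quot_mult (\<cdot>) N) N"
proof -
  let ?QN = "quot_carrier Q (\<cdot>) N"
  have "loop ?QN (quot_mult (\<cdot>) N) N"
    unfolding loop_def
  proof (intro conjI ballI)
    show "N \<in> ?QN"
      using coset_in_quot_carrier[of e] coset_unit by simp
    show "quot_mult (\<cdot>) N A B \<in> ?QN" if "A \<in> ?QN" "B \<in> ?QN" for A B
      using that by (elim quot_carrierE) (simp add: quot_mult_coset coset_in_quot_carrier)
    show "quot_mult (\<cdot>) N N A = A" if "A \<in> ?QN" for A
      using that by (elim quot_carrierE) (metis coset_unit left_unit quot_mult_coset unit_closed)
    then show "quot_mult (\<cdot>) N A N = A" if "A \<in> ?QN" for A
      using that quot_mult_commute coset_in_quot_carrier[of e] coset_unit by simp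
    show "bij_betw (quot_mult (\<cdot>) N A) ?QN ?QN" if "A \<in> ?QN" for A
      using that by (rule bij_quot_left_mult)
    show "bij_betw (\<lambda>B. quot_mult (\<cdot>) N B A) ?QN ?QN" if "A \<in> ?QN" for A
      using bij_quot_left_mult[OF that] quot_mult_commute[OF _ that]
      by (simp cong: bij_betw_cong)
  qed
  moreover have "commutative_loop ?QN (quot_mult (\<cdot>) N)"
    unfolding commutative_loop_def using quot_mult_commute by blast
  ultimately show ?thesis
    by (simp add: comm_loop_def)
qed

lemma coset_in_quotient_center_iff:
  assumes x: "x \<in> Q"
  shows "coset x N \<in> loop_center (quot_carrier Q (\<cdot>) N) (quot_mult (\<cdot>) N) N \<longleftrightarrow>
    x \<in> central_mod N"
proof -
  interpret quotient: comm_loop "quot_carrier Q (\<cdot>) N" "quot_mult (\<cdot>) N" N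
    by (rule comm_loop_quotient)
  have "quotient.nuclear (coset x N) \<longleftrightarrow> x \<in> central_mod N"
  proof
    assume "quotient.nuclear (coset x N)"
    then have "quot_mult (\<cdot>) N (coset a N) (quot_mult (\<cdot>) N (coset b N) (coset x N)) =
        quot_mult (\<cdot>) N (quot_mult (\<cdot>) N (coset a N) (coset b N)) (coset x N)"
      if "a \<in> Q" "b \<in> Q" for a b
      using that by (simp add: quotient.nuclear_def coset_in_quot_carrier)
    then show "x \<in> central_mod N"
      using x by (simp add: central_mod_def quot_mult_coset)
  next
    assume "x \<in> central_mod N"
    then show "quotient.nuclear (coset x N)"
      using x by (auto elim!: quot_carrierE simp: quotient.nuclear_def quot_mult_coset central_modD)
  qed
  then show ?thesis
    using quotient.center_iff_nuclear coset_in_quot_carrier[OF x] by blast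
qed

end

lemma upper_center_Suc:
  assumes "normal_subloop (upper_center Q (\<cdot>) e i)"
  shows "upper_center Q (\<cdot>) e (Suc i) = central_mod (upper_center Q (\<cdot>) e i)"
  using coset_in_quotient_center_iff[OF assms] central_mod_closed by auto

context
  fixes N assumes normal: "normal_subloop N" and nuclear_normal: "\<forall>\<mu>\<in>N. nuclear \<mu>"
begin

lemma nuclear_normalD: "\<mu> \<in> N \<Longrightarrow> a \<in> Q \<Longrightarrow> b \<in> Q \<Longrightarrow> a \<cdot> (b \<cdot> \<mu>) = (a \<cdot> b) \<cdot> \<mu>"
  using nuclear_normal nuclearD by blast

lemma central_mod_mult_normal:
  assumes n: "n \<in> central_mod N" and \<mu>: "\<mu> \<in> N"
  shows "n \<cdot> \<mu> \<in> central_mod N"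
proof -
  have nQ: "n \<in> Q" and \<mu>Q: "\<mu> \<in> Q"
    using n \<mu> central_mod_closed normal_closed[OF normal] by auto
  have "coset (a \<cdot> (b \<cdot> (n \<cdot> \<mu>))) N = coset ((a \<cdot> b) \<cdot> (n \<cdot> \<mu>)) N"
    if ab: "a \<in> Q" "b \<in> Q" for a b
  proof -
    have "coset (a \<cdot> (b \<cdot> (n \<cdot> \<mu>))) N = coset ((a \<cdot> (b \<cdot> n)) \<cdot> \<mu>) N"
      using nuclear_normalD[OF \<mu>] ab nQ by simp
    also have "\<dots> = coset ((a \<cdot> b) \<cdot> n) N"
      using coset_mult_right[OF normal] \<mu> ab nQ central_modD[OF n ab] by simp
    also have "\<dots> = coset (((a \<cdot> b) \<cdot> n) \<cdot> \<mu>) N"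
      using coset_mult_right[OF normal] \<mu> ab nQ by simp
    also have "((a \<cdot> b) \<cdot> n) \<cdot> \<mu> = (a \<cdot> b) \<cdot> (n \<cdot> \<mu>)"
      using nuclear_normalD[OF \<mu>] ab nQ by simp
    finally show ?thesis .
  qed
  then show ?thesis
    using nQ \<mu>Q by (simp add: central_mod_def)
qed

lemma central_mod_mult:
  assumes n: "n \<in> central_mod N" and n': "n' \<in> central_mod N"
  shows "n \<cdot> n' \<in> central_mod N"
proof -
  have nQ: "n \<in> Q" and n'Q: "n' \<in> Q"
    using n n' central_mod_closed by auto
  have "coset (a \<cdot> (b \<cdot> (n \<cdot> n'))) N = coset ((a \<cdot> b) \<cdot> (n \<cdot> n')) N"
    if ab: "a \<in> Q" "b \<in> Q" for a b
  proof -
    have "coset (a \<cdot> (b \<cdot> (n \<cdot> n'))) N = coset (a \<cdot> ((b \<cdot> n) \<cdot> n')) N"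
      by (rule coset_mult_cong[OF normal]) (use ab nQ n'Q central_modD[OF n', of b n] in auto)
    also have "\<dots> = coset ((a \<cdot> (b \<cdot> n)) \<cdot> n') N"
      using central_modD[OF n', of a "b \<cdot> n"] ab nQ by simp
    also have "\<dots> = coset (((a \<cdot> b) \<cdot> n) \<cdot> n') N"
      by (rule coset_mult_cong[OF normal]) (use ab nQ n'Q central_modD[OF n ab] in auto)
    also have "\<dots> = coset ((a \<cdot> b) \<cdot> (n \<cdot> n')) N"
      using central_modD[OF n', of "a \<cdot> b" n] ab nQ by simp
    finally show ?thesis .
  qed
  then show ?thesis
    using nQ n'Q by (simp add: central_mod_def)
qed

lemma central_mod_coset_left_commute:
  assumes n: "n \<in> central_mod N" and pq: "p \<in> Q" "q \<in> Q"
  shows "coset (n \<cdot> (p \<cdot> q)) N = coset (p \<cdot> (n \<cdot> q)) N"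
proof -
  have nQ: "n \<in> Q" using n central_mod_closed by blast
  have "n \<cdot> (p \<cdot> q) = (p \<cdot> q) \<cdot> n" "p \<cdot> (n \<cdot> q) = p \<cdot> (q \<cdot> n)"
    using nQ pq by (simp_all add: mult_commute)
  then show ?thesis
    using central_modD[OF n pq] by simp
qed

lemma central_mod_ldiv:
  assumes n: "n \<in> central_mod N" and nu: "n \<cdot> u \<in> central_mod N" and u: "u \<in> Q"
  shows "u \<in> central_mod N"
proof -
  have nQ: "n \<in> Q" using n central_mod_closed by blast
  have "coset (n \<cdot> (a \<cdot> (b \<cdot> u))) N = coset (n \<cdot> ((a \<cdot> b) \<cdot> u)) N"
    if ab: "a \<in> Q" "b \<in> Q" for a b
  proof -
    have "coset (n \<cdot> (a \<cdot> (b \<cdot> u))) N = coset (a \<cdot> (n \<cdot> (b \<cdot> u))) N"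
      using central_mod_coset_left_commute[OF n] ab u by simp
    also have "\<dots> = coset (a \<cdot> (b \<cdot> (n \<cdot> u))) N"
      by (rule coset_mult_cong[OF normal])
        (use ab u nQ central_mod_coset_left_commute[OF n, of b u] in auto)
    also have "\<dots> = coset ((a \<cdot> b) \<cdot> (n \<cdot> u)) N"
      using central_modD[OF nu ab] by simp
    also have "\<dots> = coset (n \<cdot> ((a \<cdot> b) \<cdot> u)) N"
      using central_mod_coset_left_commute[OF n, of "a \<cdot> b" u] ab u by simp
    finally show ?thesis .
  qed
  then have "coset (a \<cdot> (b \<cdot> u)) N = coset ((a \<cdot> b) \<cdot> u) N" if "a \<in> Q" "b \<in> Q" for a b
    using coset_left_cancel[OF normal nQ] that u by simp
  then show ?thesis
    using u by (simp add: central_mod_def)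
qed

lemma central_mod_reassoc_left:
  assumes "x \<in> Q" "y \<in> Q" "n \<in> central_mod N"
  obtains \<mu> where "\<mu> \<in> N" "x \<cdot> (y \<cdot> n) = (x \<cdot> y) \<cdot> (n \<cdot> \<mu>)"
proof -
  have nQ: "n \<in> Q" using assms central_mod_closed by blast
  obtain \<mu> where \<mu>: "\<mu> \<in> N" "x \<cdot> (y \<cdot> n) = ((x \<cdot> y) \<cdot> n) \<cdot> \<mu>"
    using central_modD[OF assms(3,1,2), symmetric] coset_eq_iff[OF normal] assms nQ
    by (metis mult_closed)
  then have "x \<cdot> (y \<cdot> n) = (x \<cdot> y) \<cdot> (n \<cdot> \<mu>)"
    using nuclear_normalD[OF \<mu>(1)] assms nQ by simp
  then show ?thesis using \<mu>(1) that by blast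
qed

lemma central_mod_reassoc_right:
  assumes "x \<in> Q" "y \<in> Q" "n \<in> central_mod N"
  obtains \<mu> where "\<mu> \<in> N" "(x \<cdot> y) \<cdot> n = x \<cdot> (y \<cdot> (n \<cdot> \<mu>))"
proof -
  have nQ: "n \<in> Q" using assms central_mod_closed by blast
  obtain \<mu> where \<mu>: "\<mu> \<in> N" "(x \<cdot> y) \<cdot> n = (x \<cdot> (y \<cdot> n)) \<cdot> \<mu>"
    using central_modD[OF assms(3,1,2)] coset_eq_iff[OF normal] assms nQ by (metis mult_closed)
  then have "(x \<cdot> y) \<cdot> n = x \<cdot> (y \<cdot> (n \<cdot> \<mu>))"
    using nuclear_normalD[OF \<mu>(1)] assms nQ by simp
  then show ?thesis using \<mu>(1) that by blast
qed

lemma coset_central_mod_of_member: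
  assumes x: "x \<in> Q" and n0: "n0 \<in> central_mod N"
  shows "coset (x \<cdot> n0) (central_mod N) = coset x (central_mod N)"
proof
  have n0Q: "n0 \<in> Q" using n0 central_mod_closed by blast
  show "coset (x \<cdot> n0) (central_mod N) \<subseteq> coset x (central_mod N)"
  proof
    fix z assume "z \<in> coset (x \<cdot> n0) (central_mod N)"
    then obtain n where n: "n \<in> central_mod N" "z = (x \<cdot> n0) \<cdot> n"
      using coset_mem_iff by blast
    obtain \<mu> where \<mu>: "\<mu> \<in> N" "(x \<cdot> n0) \<cdot> n = x \<cdot> (n0 \<cdot> (n \<cdot> \<mu>))"
      using central_mod_reassoc_right[OF x n0Q n(1)] by blast
    have "n0 \<cdot> (n \<cdot> \<mu>) \<in> central_mod N"
      using central_mod_mult[OF n0 central_mod_mult_normal[OF n(1) \<mu>(1)]] .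
    then show "z \<in> coset x (central_mod N)"
      using n(2) \<mu>(2) coset_mem_iff by blast
  qed
  show "coset x (central_mod N) \<subseteq> coset (x \<cdot> n0) (central_mod N)"
  proof
    fix z assume "z \<in> coset x (central_mod N)"
    then obtain n where n: "n \<in> central_mod N" "z = x \<cdot> n"
      using coset_mem_iff by blast
    define u where "u = ldiv n0 n"
    have u: "u \<in> Q" "n0 \<cdot> u = n"
      using n(1) n0Q central_mod_closed by (simp_all add: u_def)
    have uS: "u \<in> central_mod N"
      using central_mod_ldiv[OF n0] u n(1) by simp
    obtain \<mu> where \<mu>: "\<mu> \<in> N" "x \<cdot> (n0 \<cdot> u) = (x \<cdot> n0) \<cdot> (u \<cdot> \<mu>)"
      using central_mod_reassoc_left[OF x n0Q uS] by blast
    then show "z \<in> coset (x \<cdot> n0) (central_mod N)"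
      using n(2) u(2) central_mod_mult_normal[OF uS \<mu>(1)] coset_mem_iff by metis
  qed
qed

lemma normal_subloop_central_mod: "normal_subloop (central_mod N)"
  unfolding normal_subloop_def
proof (intro conjI ballI)
  show "e \<in> central_mod N"
    by (simp add: central_mod_def)
  show "central_mod N \<subseteq> Q"
    using central_mod_closed by blast
  show "coset y (central_mod N) = coset x (central_mod N)"
    if "x \<in> Q" "y \<in> coset x (central_mod N)" for x y
    using that coset_central_mod_of_member coset_mem_iff by metis
  show "(a \<cdot> n) \<cdot> (b \<cdot> n') \<in> coset (a \<cdot> b) (central_mod N)"
    if ab: "a \<in> Q" "b \<in> Q" and n: "n \<in> central_mod N" and n': "n' \<in> central_mod N"
    for a b n n'
  proof -
    have nQ: "n \<in> Q" "n' \<in> Q" using n n' central_mod_closed by auto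
    have "coset ((a \<cdot> n) \<cdot> (b \<cdot> n')) N = coset (((a \<cdot> n) \<cdot> b) \<cdot> n') N"
      using central_modD[OF n', of "a \<cdot> n" b] ab nQ by simp
    also have "\<dots> = coset (((a \<cdot> b) \<cdot> n) \<cdot> n') N"
    proof (rule coset_mult_cong[OF normal])
      have "coset ((a \<cdot> n) \<cdot> b) N = coset (b \<cdot> (a \<cdot> n)) N"
        using ab nQ by (simp add: mult_commute)
      also have "\<dots> = coset ((a \<cdot> b) \<cdot> n) N"
        using central_modD[OF n, of b a] ab by (simp add: mult_commute)
      finally show "coset ((a \<cdot> n) \<cdot> b) N = coset ((a \<cdot> b) \<cdot> n) N" .
    qed (use ab nQ in auto)
    also have "\<dots> = coset ((a \<cdot> b) \<cdot> (n \<cdot> n')) N"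
      using central_modD[OF n', of "a \<cdot> b" n] ab nQ by simp
    finally obtain \<mu> where "\<mu> \<in> N" "(a \<cdot> n) \<cdot> (b \<cdot> n') = ((a \<cdot> b) \<cdot> (n \<cdot> n')) \<cdot> \<mu>"
      using coset_eq_iff[OF normal] ab nQ by (metis mult_closed)
    then have "(a \<cdot> n) \<cdot> (b \<cdot> n') = (a \<cdot> b) \<cdot> ((n \<cdot> n') \<cdot> \<mu>)"
      using nuclear_normalD ab nQ by simp
    then show ?thesis
      using central_mod_mult_normal[OF central_mod_mult[OF n n']] \<open>\<mu> \<in> N\<close> coset_mem_iff
      by blast
  qed
  show "\<exists>n'\<in>central_mod N. (c \<cdot> t) \<cdot> n = c \<cdot> (t \<cdot> n')"
    if "c \<in> Q" "t \<in> Q" "n \<in> central_mod N" for c t n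
    using central_mod_reassoc_right[OF that] central_mod_mult_normal[OF that(3)] by metis
qed

end

lemma coset_singleton_unit [simp]: "x \<in> Q \<Longrightarrow> coset x {e} = {x}"
  by (simp add: lcoset_def)

lemma normal_subloop_unit: "normal_subloop {e}"
  by (simp add: normal_subloop_def)

lemma central_mod_unit: "central_mod {e} = center"
  by (auto simp: central_mod_def center_iff_nuclear nuclear_def)

lemma center_mult_closed:
  "z \<in> center \<Longrightarrow> z' \<in> center \<Longrightarrow> z \<cdot> z' \<in> center"
  using central_mod_mult[OF normal_subloop_unit] central_mod_unit by (simp add: nuclear_def)

lemma normal_subloop_center: "normal_subloop center"
  using normal_subloop_central_mod[OF normal_subloop_unit] central_mod_unit
  by (simp add: nuclear_def)

lemma normal_subloop_second_center: "normal_subloop (central_mod center)"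
  using normal_subloop_central_mod[OF normal_subloop_center] center_iff_nuclear by blast

lemma upper_center_3:
  "upper_center Q (\<cdot>) e 3 = central_mod (central_mod center)"
proof -
  have "upper_center Q (\<cdot>) e 1 = center"
    using upper_center_Suc[of 0] normal_subloop_unit central_mod_unit by simp
  moreover have "upper_center Q (\<cdot>) e 2 = central_mod center"
    using upper_center_Suc[of 1] calculation normal_subloop_center by (simp add: numeral_2_eq_2)
  ultimately show ?thesis
    using upper_center_Suc[of 2] normal_subloop_second_center by (simp add: numeral_3_eq_3)
qed

section \<open>Associators in automorphic loops of class 3\<close>

lemma associator_closed: "a \<in> Q \<Longrightarrow> b \<in> Q \<Longrightarrow> c \<in> Q \<Longrightarrow> associator Q (\<cdot>) a b c \<in> Q"
  by (simp add: associator_def)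

lemma mult_associator:
  "a \<in> Q \<Longrightarrow> b \<in> Q \<Longrightarrow> c \<in> Q \<Longrightarrow> (a \<cdot> (b \<cdot> c)) \<cdot> associator Q (\<cdot>) a b c = (a \<cdot> b) \<cdot> c"
  by (simp add: associator_def)

lemma associator_unique:
  "a \<in> Q \<Longrightarrow> b \<in> Q \<Longrightarrow> c \<in> Q \<Longrightarrow> t \<in> Q \<Longrightarrow> (a \<cdot> (b \<cdot> c)) \<cdot> t = (a \<cdot> b) \<cdot> c \<Longrightarrow>
    associator Q (\<cdot>) a b c = t"
  by (metis associator_def ldiv_mult mult_closed)

end

locale comm_automorphic_loop = comm_loop +
  assumes inner_hom: "g \<in> inner Q (\<cdot>) e \<Longrightarrow> x \<in> Q \<Longrightarrow> y \<in> Q \<Longrightarrow> g (x \<cdot> y) = g x \<cdot> g y"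
begin

lemma inner_fixes_associator:
  assumes g: "g \<in> inner Q (\<cdot>) e" and moves: "\<And>y. y \<in> Q \<Longrightarrow> \<exists>z\<in>center. g y = y \<cdot> z"
    and pqr: "p \<in> Q" "q \<in> Q" "r \<in> Q"
  shows "g (associator Q (\<cdot>) p q r) = associator Q (\<cdot>) p q r"
proof -
  let ?t = "associator Q (\<cdot>) p q r"
  have t: "?t \<in> Q" "(p \<cdot> (q \<cdot> r)) \<cdot> ?t = (p \<cdot> q) \<cdot> r"
    using pqr associator_closed mult_associator by auto
  obtain zp zq zr zt where z: "zp \<in> center" "zq \<in> center" "zr \<in> center" "zt \<in> center"
    and gz: "g p = p \<cdot> zp" "g q = q \<cdot> zq" "g r = r \<cdot> zr" "g ?t = ?t \<cdot> zt"
    using moves pqr t(1) by meson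
  have zQ: "zp \<in> Q" "zq \<in> Q" "zr \<in> Q" "zt \<in> Q"
    using z center_closed by auto
  define d where "d = zp \<cdot> (zq \<cdot> zr)"
  have d: "d \<in> center" "d \<in> Q"
    using z center_mult_closed center_closed by (simp_all add: d_def)
  have hom: "\<And>x y. x \<in> Q \<Longrightarrow> y \<in> Q \<Longrightarrow> g (x \<cdot> y) = g x \<cdot> g y"
    using inner_hom[OF g] by blast
  have "g ((p \<cdot> q) \<cdot> r) = ((p \<cdot> q) \<cdot> r) \<cdot> ((zp \<cdot> zq) \<cdot> zr)"
    using pqr z center_mult_closed by (simp add: hom gz center_mult_mult)
  also have "(zp \<cdot> zq) \<cdot> zr = d"
    using z zQ center_iff_nuclear nuclearD[of zr zp zq] by (simp add: d_def)
  finally have lhs: "g ((p \<cdot> q) \<cdot> r) = ((p \<cdot> q) \<cdot> r) \<cdot> d" .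
  have "g (q \<cdot> r) = (q \<cdot> r) \<cdot> (zq \<cdot> zr)"
    using pqr z by (simp add: hom gz center_mult_mult)
  then have "g ((p \<cdot> (q \<cdot> r)) \<cdot> ?t) = ((p \<cdot> (q \<cdot> r)) \<cdot> d) \<cdot> (?t \<cdot> zt)"
    using pqr z t(1) center_mult_closed center_mult_mult[of zp "zq \<cdot> zr" p "q \<cdot> r"]
    by (simp add: hom gz d_def)
  also have "\<dots> = ((p \<cdot> (q \<cdot> r)) \<cdot> ?t) \<cdot> (d \<cdot> zt)"
    using pqr z d t(1) by (intro center_mult_mult) simp_all
  also have "\<dots> = ((p \<cdot> q) \<cdot> r) \<cdot> (d \<cdot> zt)"
    using t(2) by simp
  finally have "((p \<cdot> q) \<cdot> r) \<cdot> d = ((p \<cdot> q) \<cdot> r) \<cdot> (d \<cdot> zt)"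
    using lhs t(2) by simp
  then have "d \<cdot> e = d \<cdot> zt"
    using left_cancel[of "(p \<cdot> q) \<cdot> r" d "d \<cdot> zt"] pqr d zQ by simp
  then have "zt = e"
    using left_cancel[of d e zt] d zQ by simp
  then show ?thesis
    using gz t by simp
qed

lemma left_inner_map_fixes_associator:
  assumes ab: "a \<in> Q" "b \<in> Q"
    and mod_center: "\<And>y. y \<in> Q \<Longrightarrow> coset (a \<cdot> (b \<cdot> y)) center = coset ((a \<cdot> b) \<cdot> y) center"
    and pqr: "p \<in> Q" "q \<in> Q" "r \<in> Q"
  shows "a \<cdot> (b \<cdot> associator Q (\<cdot>) p q r) = (a \<cdot> b) \<cdot> associator Q (\<cdot>) p q r"
proof -
  have "\<exists>z\<in>center. left_inner_map a b y = y \<cdot> z" if y: "y \<in> Q" for y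
  proof -
    obtain z where z: "z \<in> center" "a \<cdot> (b \<cdot> y) = ((a \<cdot> b) \<cdot> y) \<cdot> z"
      using mod_center[OF y] coset_eq_iff[OF normal_subloop_center] ab y by (metis mult_closed)
    then have "(a \<cdot> b) \<cdot> left_inner_map a b y = (a \<cdot> b) \<cdot> (y \<cdot> z)"
      using ab y center_iff_nuclear nuclearD mult_left_inner_map by simp
    then show ?thesis
      using z(1) left_cancel ab y left_inner_map_closed center_closed by (metis mult_closed)
  qed
  then have "left_inner_map a b (associator Q (\<cdot>) p q r) = associator Q (\<cdot>) p q r"
    using inner_fixes_associator left_inner_map_inner ab pqr by blast
  then show ?thesis
    using mult_left_inner_map ab pqr associator_closed by metis
qed

lemma associator_assoc_second_center:
  assumes x: "x \<in> Q" and pqr: "p \<in> Q" "q \<in> Q" "r \<in> Q"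
    and v: "v \<in> central_mod center"
  shows "(x \<cdot> associator Q (\<cdot>) p q r) \<cdot> v = x \<cdot> (associator Q (\<cdot>) p q r \<cdot> v)"
proof -
  let ?u = "associator Q (\<cdot>) p q r"
  have u: "?u \<in> Q" using pqr associator_closed by simp
  have vQ: "v \<in> Q" using v central_mod_closed by blast
  have vx: "coset ((v \<cdot> x) \<cdot> y) center = coset ((x \<cdot> y) \<cdot> v) center" if y: "y \<in> Q" for y
  proof -
    have "(v \<cdot> x) \<cdot> y = y \<cdot> (x \<cdot> v)"
      using vQ x y by (simp add: mult_commute)
    then show ?thesis
      using central_modD[OF v y x] x y by (simp add: mult_commute)
  qed
  have "v \<cdot> (x \<cdot> ?u) = (v \<cdot> x) \<cdot> ?u"
  proof (rule left_inner_map_fixes_associator[OF vQ x _ pqr])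
    fix y assume y: "y \<in> Q"
    have "v \<cdot> (x \<cdot> y) = (x \<cdot> y) \<cdot> v"
      using vQ x y by (simp add: mult_commute)
    then show "coset (v \<cdot> (x \<cdot> y)) center = coset ((v \<cdot> x) \<cdot> y) center"
      using vx[OF y] by simp
  qed
  moreover have "x \<cdot> (v \<cdot> ?u) = (x \<cdot> v) \<cdot> ?u"
  proof (rule left_inner_map_fixes_associator[OF x vQ _ pqr])
    fix y assume y: "y \<in> Q"
    have "coset (x \<cdot> (v \<cdot> y)) center = coset ((x \<cdot> y) \<cdot> v) center"
      using central_modD[OF v x y] vQ y by (simp add: mult_commute[of v y])
    then show "coset (x \<cdot> (v \<cdot> y)) center = coset ((x \<cdot> v) \<cdot> y) center"
      using vx[OF y] vQ x by (simp add: mult_commute[of v x])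
  qed
  ultimately show ?thesis
    using x u vQ by (simp add: mult_commute)
qed

context
  assumes class3: "central_mod (central_mod center) = Q"
begin

lemma associator_in_second_center:
  assumes abc: "a \<in> Q" "b \<in> Q" "c \<in> Q"
  shows "associator Q (\<cdot>) a b c \<in> central_mod center"
proof -
  have "coset (a \<cdot> (b \<cdot> c)) (central_mod center) = coset ((a \<cdot> b) \<cdot> c) (central_mod center)"
    using class3 central_modD abc by blast
  then obtain n where "n \<in> central_mod center" "(a \<cdot> b) \<cdot> c = (a \<cdot> (b \<cdot> c)) \<cdot> n"
    using coset_eq_iff[OF normal_subloop_second_center] abc by (metis mult_closed)
  then show ?thesis
    using associator_unique abc central_mod_closed by metis
qed

lemma associator_eq_inv_reverse:
  assumes abc: "a \<in> Q" "b \<in> Q" "c \<in> Q"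
  shows "associator Q (\<cdot>) a b c = loop_inv Q (\<cdot>) e (associator Q (\<cdot>) c b a)"
proof -
  let ?v = "associator Q (\<cdot>) a b c" and ?u = "associator Q (\<cdot>) c b a"
  let ?x = "(a \<cdot> b) \<cdot> c"
  have uv: "?u \<in> Q" "?v \<in> Q"
    using abc associator_closed by auto
  have "?x \<cdot> (?u \<cdot> ?v) = (?x \<cdot> ?u) \<cdot> ?v"
    using associator_assoc_second_center[OF _ abc(3,2,1) associator_in_second_center[OF abc]]
      abc by simp
  also have "?x \<cdot> ?u = a \<cdot> (b \<cdot> c)"
    using mult_associator[of c b a] abc by (simp add: mult_commute)
  also have "(a \<cdot> (b \<cdot> c)) \<cdot> ?v = ?x \<cdot> e"
    using mult_associator abc by simp
  finally have "?x \<cdot> (?u \<cdot> ?v) = ?x \<cdot> e" .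
  then have "?u \<cdot> ?v = e"
    using left_cancel[of ?x "?u \<cdot> ?v" e] abc uv by simp
  then show ?thesis
    unfolding loop_inv_def using ldiv_mult[of ?u ?v] uv by simp
qed

lemma associator_eq_mult_associators:
  assumes abc: "a \<in> Q" "b \<in> Q" "c \<in> Q"
  shows "associator Q (\<cdot>) a b c = associator Q (\<cdot>) a c b \<cdot> associator Q (\<cdot>) b a c"
proof -
  let ?v = "associator Q (\<cdot>) a b c" and ?p = "associator Q (\<cdot>) a c b"
    and ?q = "associator Q (\<cdot>) b a c" and ?y = "a \<cdot> (b \<cdot> c)"
  have pqv: "?p \<in> Q" "?q \<in> Q" "?v \<in> Q"
    using abc associator_closed by auto
  have "b \<cdot> (a \<cdot> c) = ?y \<cdot> ?p"
    using mult_associator[of a c b] abc by (simp add: mult_commute)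
  then have "?y \<cdot> ?v = (?y \<cdot> ?p) \<cdot> ?q"
    using mult_associator[of a b c] mult_associator[of b a c] abc by (simp add: mult_commute)
  also have "\<dots> = ?y \<cdot> (?p \<cdot> ?q)"
    using associator_assoc_second_center[OF _ abc(1,3,2) associator_in_second_center[OF abc(2,1,3)]]
      abc by simp
  finally show ?thesis
    using left_cancel[of ?y ?v "?p \<cdot> ?q"] abc pqv by simp
qed

end

end

theorem lemma2p7:
  fixes Q :: "'a set" and m :: "'a \<Rightarrow> 'a \<Rightarrow> 'a" and e :: 'a
  assumes "automorphic_loop Q m e"
    and "commutative_loop Q m"
    and "nilpotency_class Q m e 3"
  shows "\<forall>a\<in>Q. \<forall>b\<in>Q. \<forall>c\<in>Q.
           associator Q m a b c = loop_inv Q m e (associator Q m c b a)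
         \<and> associator Q m a b c = m (associator Q m a c b) (associator Q m b a c)"
proof -
  interpret comm_automorphic_loop Q m e
    using assms(1,2) unfolding automorphic_loop_def comm_automorphic_loop_def
      comm_automorphic_loop_axioms_def comm_loop_def by blast
  have "central_mod (central_mod center) = Q"
    using assms(3) upper_center_3 by (simp add: nilpotency_class_def)
  then show ?thesis
    using associator_eq_inv_reverse associator_eq_mult_associators by blast
qed

end
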